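(* For every $\epsilon>0$ there is $N=N(\epsilon)$ such that every connected graph $G=(V,E)$ with $n>N$ vertices and minimum degree at least $\epsilon n$ satisfies the following. There is a partition of $V$ into $k\le N$ sets $V_1,\ldots,V_k$ and an edge coloring $\chi:E\to\mathcal C$, where $\mathcal C=\{a_1,a_2,a_3,a_4,b_1,b_2,b_3,b_4\}$ is a set of eight distinct colors, such that for every $i\in[k]$ and every $u,v\in V_i$, the pair $u,v$ is both $a$-rainbow connected and $b$-rainbow connected under $\chi$.
   Context: All graphs are finite, simple and undirected. A path is rainbow if its edges have pairwise distinct colors. Under a coloring $\chi:E\to\mathcal C$, vertices $u,v$ are $a$-rainbow connected if there is a rainbow path from $u$ to $v$ all of whose edges have colors in $\{a_1,a_2,a_3,a_4\}$, and $b$-rainbow connected if there is a rainbow path from $u$ to $v$ all of whose edges have colors in $\{b_1,b_2,b_3,b_4\}$. *)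

theory Defs
  imports Complex_Main "HOL-Library.Disjoint_Sets"
begin

definition simple_graph :: "'a set \<Rightarrow> 'a set set \<Rightarrow> bool" where
  "simple_graph V E \<longleftrightarrow> finite V \<and> (\<forall>e\<in>E. e \<subseteq> V \<and> card e = 2)"

definition degree :: "'a set set \<Rightarrow> 'a \<Rightarrow> nat" where
  "degree E v = card {e \<in> E. v \<in> e}"

definition is_path :: "'a set set \<Rightarrow> 'a list \<Rightarrow> bool" where
  "is_path E ps \<longleftrightarrow> ps \<noteq> [] \<and> distinct ps \<and>
     (\<forall>i. Suc i < length ps \<longrightarrow> {ps ! i, ps ! Suc i} \<in> E)"

definition path_edges :: "'a list \<Rightarrow> 'a set list" where
  "path_edges ps = map (\<lambda>i. {ps ! i, ps ! Suc i}) [0..<length ps - 1]"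

definition connected_graph :: "'a set \<Rightarrow> 'a set set \<Rightarrow> bool" where
  "connected_graph V E \<longleftrightarrow> V \<noteq> {} \<and>
     (\<forall>u\<in>V. \<forall>v\<in>V. \<exists>ps. is_path E ps \<and> hd ps = u \<and> last ps = v)"

datatype colour = a1 | a2 | a3 | a4 | b1 | b2 | b3 | b4

definition rainbow_connected_in ::
    "'a set set \<Rightarrow> ('a set \<Rightarrow> colour) \<Rightarrow> colour set \<Rightarrow> 'a \<Rightarrow> 'a \<Rightarrow> bool" where
  "rainbow_connected_in E \<chi> C u v \<longleftrightarrow>
     (\<exists>ps. is_path E ps \<and> hd ps = u \<and> last ps = v \<and>
        distinct (map \<chi> (path_edges ps)) \<and> set (map \<chi> (path_edges ps)) \<subseteq> C)"

definition a_rainbow_connected where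
  "a_rainbow_connected E \<chi> u v \<longleftrightarrow> rainbow_connected_in E \<chi> {a1, a2, a3, a4} u v"

definition b_rainbow_connected where
  "b_rainbow_connected E \<chi> u v \<longleftrightarrow> rainbow_connected_in E \<chi> {b1, b2, b3, b4} u v"

end

theory Submission
  imports Defs "HOL-Library.FuncSet"
begin

text \<open>A greedy packing argument yields fewer than \<open>m \<approx> 3/\<epsilon>\<close> hubs such that every other
  vertex \<open>u\<close> has about \<open>\<epsilon>n/(2m)\<close> common neighbours outside the hubs with some hub \<open>x(u)\<close>.
  Give each non-hub vertex one of eight classes, a level \<open>h < 4\<close> and a bit, so that for every
  \<open>u\<close> these common neighbours show all eight classes; counting colourings shows that this is
  possible once \<open>n\<close> is large. Colour edges by a symmetric function of the classes of their ends.
  For \<open>u\<close> and \<open>v\<close> with the same hub \<open>x\<close> and the same class, a path \<open>u y x z v\<close> through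
  suitable common neighbours of levels 0 and 1 (resp. 2 and 3) is a-rainbow (resp. b-rainbow),
  so the blocks are the fibres of the map to (hub, class), at most \<open>9m\<close> of them.\<close>

definition neighbours :: "'a set set \<Rightarrow> 'a \<Rightarrow> 'a set" where
  "neighbours E u = {w. {u, w} \<in> E}"

lemma neighbours_subset: "simple_graph V E \<Longrightarrow> neighbours E u \<subseteq> V"
  unfolding simple_graph_def neighbours_def by auto

lemma card_neighbours:
  assumes "simple_graph V E"
  shows "card (neighbours E u) = degree E u"
proof -
  have "bij_betw (\<lambda>w. {u, w}) (neighbours E u) {e \<in> E. u \<in> e}"
  proof (rule bij_betwI')
    fix e assume e: "e \<in> {e \<in> E. u \<in> e}"
    then have "card e = 2" using assms by (auto simp: simple_graph_def)
    then obtain x y where "e = {x, y}" by (auto simp: card_2_iff)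
    with e show "\<exists>w\<in>neighbours E u. e = {u, w}" by (auto simp: neighbours_def insert_commute)
  qed (auto simp: neighbours_def doubleton_eq_iff)
  then show ?thesis unfolding degree_def by (rule bij_betw_same_card)
qed

lemma card_UN_ge_sum_card_minus_overlaps:
  fixes A :: "'a \<Rightarrow> 'b set" and t :: real
  assumes "finite T" "\<forall>x\<in>T. finite (A x)" "0 \<le> t"
    and "\<forall>x\<in>T. \<forall>y\<in>T. x \<noteq> y \<longrightarrow> real (card (A x \<inter> A y)) \<le> t"
  shows "(\<Sum>x\<in>T. real (card (A x))) - real (card T) ^ 2 * t \<le> real (card (\<Union>x\<in>T. A x))"
  using assms(1,2,4)
proof (induction T rule: finite_induct)
  case empty
  then show ?case by simp
next
  case (insert a T)
  let ?U = "\<Union>x\<in>T. A x"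
  have "real (card (A a \<inter> ?U)) \<le> (\<Sum>y\<in>T. real (card (A a \<inter> A y)))"
    using card_UN_le[OF insert(1), of "\<lambda>y. A a \<inter> A y"] by (simp flip: of_nat_sum)
  also have "\<dots> \<le> real (card T) * t"
    by (rule sum_bounded_above) (use insert.prems insert.hyps(2) in auto)
  finally have overlap: "real (card (A a \<inter> ?U)) \<le> real (card T) * t" .
  have "card (A a) + card ?U = card (A a \<union> ?U) + card (A a \<inter> ?U)"
    using insert by (intro card_Un_Int) auto
  then have "real (card (\<Union>x\<in>insert a T. A x)) =
      real (card (A a)) + real (card ?U) - real (card (A a \<inter> ?U))"
    by (simp flip: of_nat_add)
  moreover have "real (card T) ^ 2 * t + real (card T) * t \<le> real (card (insert a T)) ^ 2 * t"
    using insert(1,2) assms(3) by (simp add: power2_eq_square algebra_simps)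
  ultimately show ?case using insert overlap by simp
qed

text \<open>A maximal set of points whose sets pairwise share fewer than \<open>e n/(2m)\<close> elements has
  fewer than \<open>m\<close> members, as \<open>m\<close> of them would cover at least \<open>m e n/2 \<ge> 3n/2\<close> elements.
  By maximality every other point shares many elements with one of them.\<close>
lemma exists_hub_set:
  fixes A :: "'a \<Rightarrow> 'b set" and e :: real
  assumes "finite V" "finite S" "S \<noteq> {}" "0 < e" "3 \<le> real m * e"
    and A: "\<forall>x\<in>V. A x \<subseteq> S \<and> e * real (card S) \<le> real (card (A x))"
  shows "\<exists>H\<subseteq>V. card H < m \<and>
           (\<forall>u\<in>V - H. \<exists>x\<in>H. e / (2 * real m) * real (card S) \<le> real (card (A u \<inter> A x)))"
proof -
  define n where "n = real (card S)"
  define t where "t = e / (2 * real m) * n"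
  have n: "0 < n" using assms(2,3) by (simp add: n_def card_gt_0_iff)
  have m: "0 < m" using assms(5) by (cases m) auto
  have t: "0 \<le> t" using assms(4) n by (simp add: t_def)
  define sparse where
    "sparse T \<longleftrightarrow> T \<subseteq> V \<and> (\<forall>x\<in>T. \<forall>y\<in>T. x \<noteq> y \<longrightarrow> real (card (A x \<inter> A y)) < t)" for T
  have small: "card T < m" if "sparse T" for T
  proof (rule ccontr)
    assume "\<not> card T < m"
    then obtain T' where T': "T' \<subseteq> T" "card T' = m"
      by (metis not_less obtain_subset_with_card_n)
    have T'V: "T' \<subseteq> V" using T' that by (auto simp: sparse_def)
    have finT': "finite T'" using T'V assms(1) finite_subset by blast
    have finA: "\<forall>x\<in>T'. finite (A x)" using T'V A assms(2) finite_subset by blast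
    have "real m * e * n / 2 = real m * (e * n) - real m ^ 2 * t"
      using m by (simp add: t_def power2_eq_square field_simps)
    also have "\<dots> \<le> (\<Sum>x\<in>T'. real (card (A x))) - real (card T') ^ 2 * t"
      using sum_bounded_below[of T' "e * n" "\<lambda>x. real (card (A x))"] T' T'V A
      by (auto simp: n_def)
    also have "\<dots> \<le> real (card (\<Union>x\<in>T'. A x))"
      by (rule card_UN_ge_sum_card_minus_overlaps[OF finT' finA t])
        (use that T' in \<open>auto simp: sparse_def less_imp_le subset_iff\<close>)
    also have "\<dots> \<le> n"
      unfolding n_def using T'V A assms(2) by (intro of_nat_mono card_mono) auto
    finally have "real m * e * n / 2 \<le> n" .
    moreover have "3 * n \<le> real m * e * n" using mult_right_mono[OF assms(5)] n by simp
    ultimately show False using n by linarith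
  qed
  have "sparse {}" by (simp add: sparse_def)
  moreover have "\<forall>T. sparse T \<longrightarrow> card T < card V + 1"
    using assms(1) card_mono by (fastforce simp: sparse_def)
  ultimately obtain H where H: "sparse H" "\<forall>T. sparse T \<longrightarrow> card T \<le> card H"
    using ex_has_greatest_nat[of sparse "{}" card "card V + 1"] by blast
  have overlap: "\<exists>x\<in>H. t \<le> real (card (A u \<inter> A x))" if u: "u \<in> V - H" for u
  proof -
    have "finite H" using H(1) assms(1) finite_subset by (auto simp: sparse_def)
    then have "\<not> sparse (insert u H)" using H(2) u by fastforce
    then obtain x y where xy: "x \<in> insert u H" "y \<in> insert u H" "x \<noteq> y"
      "t \<le> real (card (A x \<inter> A y))"
      using u H(1) by (auto simp: sparse_def not_less)
    with H(1) have "x = u \<and> y \<in> H \<or> y = u \<and> x \<in> H"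
      unfolding sparse_def by fastforce
    with xy(4) show ?thesis by (auto simp: Int_commute)
  qed
  show ?thesis
  proof (intro exI conjI)
    show "H \<subseteq> V" using H(1) by (simp add: sparse_def)
    show "card H < m" by (rule small[OF H(1)])
    show "\<forall>u\<in>V - H. \<exists>x\<in>H. e / (2 * real m) * real (card S) \<le> real (card (A u \<inter> A x))"
      using overlap by (simp add: t_def n_def)
  qed
qed

text \<open>Counting version of the random colouring: the colourings that miss colour \<open>c\<close> on
  \<open>D u\<close> form a fraction \<open>(1 - 1/q)^|D u|\<close> of all \<open>q^|W|\<close> colourings, and together they do not
  exhaust them.\<close>
lemma exists_colouring_meeting_all:
  fixes D :: "'b \<Rightarrow> 'a set" and K :: "'c set" and d :: real
  assumes W: "finite W" and U: "finite U" and K: "finite K" "2 \<le> card K"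
    and D: "\<forall>u\<in>U. D u \<subseteq> W \<and> d \<le> real (card (D u))"
    and small: "real (card U) * card K * (1 - 1 / card K) powr d < 1"
  shows "\<exists>f. (\<forall>w\<in>W. f w \<in> K) \<and> (\<forall>u\<in>U. \<forall>c\<in>K. \<exists>w\<in>D u. f w = c)"
proof -
  define r where "r = 1 - 1 / real (card K)"
  have r: "0 < r" "r < 1" using K(2) by (auto simp: r_def)
  define \<Omega> where "\<Omega> = PiE W (\<lambda>_. K)"
  define Bad where "Bad u c = {f\<in>\<Omega>. \<forall>w\<in>D u. f w \<noteq> c}" for u c
  have card_\<Omega>: "card \<Omega> = card K ^ card W" unfolding \<Omega>_def using W by (simp add: card_PiE)
  have card_Bad: "real (card (Bad u c)) \<le> real (card K) ^ card W * r powr d"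
    if u: "u \<in> U" and c: "c \<in> K" for u c
  proof -
    have DW: "D u \<subseteq> W" and d: "d \<le> real (card (D u))" using D u by auto
    have "Bad u c = PiE W (\<lambda>w. if w \<in> D u then K - {c} else K)"
      unfolding Bad_def \<Omega>_def using DW by (auto simp: PiE_iff extensional_def split: if_splits)
    then have "card (Bad u c) = (\<Prod>w\<in>W. if w \<in> D u then card K - 1 else card K)"
      using W K c by (auto simp: card_PiE card_Diff_singleton intro!: prod.cong)
    also have "\<dots> = (card K - 1) ^ card (D u) * card K ^ card (W - D u)"
      using W DW by (simp add: prod.If_cases Int_absorb1 Diff_eq)
    finally have "real (card (Bad u c)) =
        (real (card K) - 1) ^ card (D u) * real (card K) ^ (card W - card (D u))"
      using K(2) DW W by (simp add: of_nat_diff card_Diff_subset finite_subset)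
    also have "\<dots> = real (card K) ^ card W * r ^ card (D u)"
      using K(2) card_mono[OF W DW]
      by (simp add: r_def field_simps power_mult_distrib[symmetric] flip: power_add)
    also have "\<dots> \<le> real (card K) ^ card W * r powr d"
      using r d by (intro mult_left_mono) (simp_all add: powr_realpow[symmetric] powr_mono')
    finally show ?thesis .
  qed
  have "card (\<Union>u\<in>U. \<Union>c\<in>K. Bad u c) \<le> (\<Sum>u\<in>U. card (\<Union>c\<in>K. Bad u c))"
    by (rule card_UN_le[OF U])
  also have "\<dots> \<le> (\<Sum>u\<in>U. \<Sum>c\<in>K. card (Bad u c))"
    by (rule sum_mono) (rule card_UN_le[OF K(1)])
  finally have "real (card (\<Union>u\<in>U. \<Union>c\<in>K. Bad u c)) \<le> real (\<Sum>u\<in>U. \<Sum>c\<in>K. card (Bad u c))"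
    by (rule of_nat_mono)
  also have "\<dots> \<le> (\<Sum>u\<in>U. \<Sum>c\<in>K. real (card K) ^ card W * r powr d)"
    unfolding of_nat_sum by (intro sum_mono card_Bad)
  also have "\<dots> = real (card U) * card K * r powr d * real (card K) ^ card W"
    by simp
  also have "\<dots> < real (card K) ^ card W"
    using mult_strict_right_mono[OF small, of "real (card K) ^ card W"] K(2) by (simp add: r_def)
  finally have "card (\<Union>u\<in>U. \<Union>c\<in>K. Bad u c) < card \<Omega>"
    unfolding card_\<Omega> by (metis of_nat_less_iff of_nat_power)
  then have "(\<Union>u\<in>U. \<Union>c\<in>K. Bad u c) \<noteq> \<Omega>" by auto
  moreover have "(\<Union>u\<in>U. \<Union>c\<in>K. Bad u c) \<subseteq> \<Omega>" by (auto simp: Bad_def)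
  ultimately obtain f where "f \<in> \<Omega>" "f \<notin> (\<Union>u\<in>U. \<Union>c\<in>K. Bad u c)" by blast
  then show ?thesis by (auto simp: Bad_def \<Omega>_def PiE_iff)
qed

lemma eventually_n_times_powr_less_1:
  fixes r d c C :: real
  assumes "0 < r" "r < 1" "0 < d"
  shows "eventually (\<lambda>n. real n * C * r powr (d * real n - c) < 1) sequentially"
proof -
  have "(\<lambda>n. real n * (r powr d) ^ n) \<longlonglongrightarrow> 0"
    using assms powr_less_mono2[of d r 1] by (intro powser_times_n_limit_0) auto
  then have lim: "(\<lambda>n. C * r powr (- c) * (real n * (r powr d) ^ n)) \<longlonglongrightarrow> 0"
    by (rule tendsto_mult_right_zero)
  have eq: "real n * C * r powr (d * real n - c) = C * r powr (- c) * (real n * (r powr d) ^ n)"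
    for n
    using assms(1) by (simp add: powr_diff powr_minus powr_realpow[symmetric] powr_powr field_simps)
  show ?thesis unfolding eq using order_tendstoD(2)[OF lim zero_less_one] .
qed

lemma partition_by_key:
  fixes key :: "'a \<Rightarrow> 'k"
  assumes "finite V" "card (key ` V) \<le> N"
  shows "\<exists>k P. k \<le> N \<and> (\<forall>i\<in>{1..k}. P i \<noteq> {}) \<and> disjoint_family_on P {1..k} \<and>
           (\<Union>i\<in>{1..k}. P i) = V \<and> (\<forall>i\<in>{1..k}. \<forall>u\<in>P i. \<forall>v\<in>P i. key u = key v)"
proof -
  let ?k = "card (key ` V)"
  obtain g where g: "bij_betw g {1..?k} (key ` V)"
    using ex_bij_betw_nat_finite_1 assms(1) by blast
  define P where "P i = {v\<in>V. key v = g i}" for i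
  have nonempty: "P i \<noteq> {}" if "i \<in> {1..?k}" for i
    using bij_betwE[OF g] that by (fastforce simp: P_def)
  have disjoint: "disjoint_family_on P {1..?k}"
    unfolding disjoint_family_on_def
  proof (intro ballI impI)
    fix i j assume "i \<in> {1..?k}" "j \<in> {1..?k}" "i \<noteq> j"
    then have "g i \<noteq> g j" using bij_betw_imp_inj_on[OF g] by (auto dest: inj_onD)
    then show "P i \<inter> P j = {}" by (auto simp: P_def)
  qed
  have cover: "(\<Union>i\<in>{1..?k}. P i) = V"
  proof
    show "V \<subseteq> (\<Union>i\<in>{1..?k}. P i)"
    proof
      fix v assume "v \<in> V"
      then have "key v \<in> g ` {1..?k}" using bij_betw_imp_surj_on[OF g] by simp
      then obtain i where i: "i \<in> {1..?k}" "g i = key v" by (metis imageE)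
      with \<open>v \<in> V\<close> have "v \<in> P i" by (simp add: P_def)
      with i(1) show "v \<in> (\<Union>i\<in>{1..?k}. P i)" by blast
    qed
  qed (auto simp: P_def)
  show ?thesis
    using assms(2) nonempty disjoint cover
    by (intro exI[of _ ?k] exI[of _ P] conjI ballI) (auto simp: P_def)
qed

lemma exists_edge_function:
  assumes "\<And>p q. g p q = g q p"
  obtains \<chi> where "\<And>p q. \<chi> {p, q} = g p q"
proof
  define \<chi> where "\<chi> e = (SOME c. \<exists>p q. e = {p, q} \<and> c = g p q)" for e
  show "\<chi> {p, q} = g p q" for p q
  proof -
    have "\<exists>p' q'. {p, q} = {p', q'} \<and> \<chi> {p, q} = g p' q'"
      unfolding \<chi>_def by (rule someI) blast
    then show ?thesis using assms by (auto simp: doubleton_eq_iff)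
  qed
qed

text \<open>\<open>None\<close> is the class of the hubs; the other classes are pairs of a level and a bit.\<close>
type_synonym vertex_class = "(nat \<times> bool) option"

definition leaf_colour :: "nat \<Rightarrow> colour" where
  "leaf_colour h = [a1, a3, b1, b3] ! h"

definition hub_colour :: "nat \<Rightarrow> colour" where
  "hub_colour h = [a2, a4, b2, b4] ! h"

text \<open>The leaf colour of an edge between two non-hub classes is that of the larger level if
  their bits differ and of the smaller one otherwise. Thus it is symmetric, and every class
  \<open>c\<close> has at each level \<open>h\<close> a partner class joined to \<open>c\<close> in the leaf colour of level \<open>h\<close>.\<close>
fun class_colour :: "vertex_class \<Rightarrow> vertex_class \<Rightarrow> colour" where
  "class_colour None None = a1"
| "class_colour None (Some (h, _)) = hub_colour h"
| "class_colour (Some (h, _)) None = hub_colour h"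
| "class_colour (Some (h, b)) (Some (h', b')) = leaf_colour (if b = b' then min h h' else max h h')"

lemma class_colour_commute: "class_colour c d = class_colour d c"
  by (cases c; cases d) (auto simp: min.commute max.commute)

definition partner :: "nat \<Rightarrow> nat \<times> bool \<Rightarrow> nat \<times> bool" where
  "partner h c = (h, if h < fst c then snd c else \<not> snd c)"

lemma partner_ne: "partner h c \<noteq> c"
  by (cases c) (auto simp: partner_def)

lemma class_colour_partner: "class_colour (Some c) (Some (partner h c)) = leaf_colour h"
  by (cases c) (auto simp: partner_def)

lemma class_colour_hub_partner:
  "class_colour (Some (partner h c)) None = hub_colour h"
  "class_colour None (Some (partner h c)) = hub_colour h"
  by (simp_all add: partner_def)

lemma rainbow_connected_in_refl: "rainbow_connected_in E \<chi> C u u"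
  unfolding rainbow_connected_in_def
  by (rule exI[of _ "[u]"]) (simp add: is_path_def path_edges_def)

lemma rainbow_path_through_hub:
  assumes \<chi>: "\<And>p q. \<chi> {p, q} = class_colour (cls p) (cls q)"
    and x: "cls x = None" and uv: "cls u = Some c" "cls v = Some c" "u \<noteq> v"
    and y: "{u, y} \<in> E" "{y, x} \<in> E" "cls y = Some (partner h c)"
    and z: "{x, z} \<in> E" "{z, v} \<in> E" "cls z = Some (partner h' c)"
    and colours: "distinct [leaf_colour h, hub_colour h, hub_colour h', leaf_colour h']"
      "{leaf_colour h, hub_colour h, hub_colour h', leaf_colour h'} \<subseteq> C"
  shows "rainbow_connected_in E \<chi> C u v"
proof -
  have "partner h c \<noteq> partner h' c" using colours(1) by (auto simp: partner_def)
  then have "distinct [u, y, x, z, v]"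
    using x uv y(3) z(3) partner_ne[of h c] partner_ne[of h' c] by auto
  then have "is_path E [u, y, x, z, v]"
    using y z by (auto simp: is_path_def less_Suc_eq nth_Cons')
  moreover have "map \<chi> (path_edges [u, y, x, z, v]) =
      [leaf_colour h, hub_colour h, hub_colour h', leaf_colour h']"
    using \<chi> x uv y(3) z(3) class_colour_partner class_colour_hub_partner
    by (simp add: path_edges_def upt_rec class_colour_commute[of "Some (partner h' c)"])
  ultimately show ?thesis
    unfolding rainbow_connected_in_def using colours by (intro exI[of _ "[u, y, x, z, v]"]) simp
qed

lemma rainbow_connected_through_hub:
  assumes \<chi>: "\<And>p q. \<chi> {p, q} = class_colour (cls p) (cls q)"
    and x: "cls x = None" and uv: "cls u = Some c" "cls v = Some c" "u \<noteq> v"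
    and spokes: "\<And>w h. w \<in> {u, v} \<Longrightarrow> h < 4 \<Longrightarrow>
                   \<exists>y. {w, y} \<in> E \<and> {y, x} \<in> E \<and> cls y = Some (partner h c)"
  shows "a_rainbow_connected E \<chi> u v \<and> b_rainbow_connected E \<chi> u v"
proof -
  have path: "rainbow_connected_in E \<chi> C u v"
    if levels: "h < 4" "h' < 4"
      and colours: "distinct [leaf_colour h, hub_colour h, hub_colour h', leaf_colour h']"
      "{leaf_colour h, hub_colour h, hub_colour h', leaf_colour h'} \<subseteq> C" for h h' C
  proof -
    obtain y where y: "{u, y} \<in> E" "{y, x} \<in> E" "cls y = Some (partner h c)"
      using spokes[of u h] levels(1) by blast
    obtain z where z: "{v, z} \<in> E" "{z, x} \<in> E" "cls z = Some (partner h' c)"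
      using spokes[of v h'] levels(2) by blast
    have "{x, z} \<in> E" "{z, v} \<in> E" using z by (simp_all add: insert_commute)
    then show ?thesis
      by (rule rainbow_path_through_hub[OF \<chi> x uv y _ _ z(3) colours])
  qed
  show ?thesis
    unfolding a_rainbow_connected_def b_rainbow_connected_def
    using path[of 0 1] path[of 2 3] by (simp add: leaf_colour_def hub_colour_def)
qed

lemma rainbow_connected_same_hub_class:
  assumes \<chi>: "\<And>p q. \<chi> {p, q} = class_colour (cls p) (cls q)"
    and cls: "\<And>w. cls w = (if w \<in> H then None else Some (f w))"
    and hub_H: "\<forall>x\<in>H. hub x = x" and hub: "\<forall>u\<in>V - H. hub u \<in> H"
    and classes: "\<forall>u\<in>V - H. \<forall>c\<in>{..<4} \<times> UNIV.
                    \<exists>w\<in>neighbours E u \<inter> neighbours E (hub u) - H. f w = c"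
    and uv: "u \<in> V" "v \<in> V" "hub v = hub u" "cls v = cls u"
  shows "a_rainbow_connected E \<chi> u v \<and> b_rainbow_connected E \<chi> u v"
proof (cases "u = v")
  case True
  then show ?thesis
    by (simp add: a_rainbow_connected_def b_rainbow_connected_def rainbow_connected_in_refl)
next
  case False
  have cls_None: "cls w = None \<longleftrightarrow> w \<in> H" for w by (simp add: cls)
  have "u \<notin> H"
  proof
    assume "u \<in> H"
    then have "v \<in> H" using cls_None uv(4) by metis
    with \<open>u \<in> H\<close> have "u = v" using hub_H uv(3) by metis
    with False show False ..
  qed
  then have "v \<notin> H" using cls_None uv(4) by metis
  have x: "cls (hub u) = None" "cls u = Some (f u)" "cls v = Some (f u)"
    using hub uv(1,4) \<open>u \<notin> H\<close> cls_None by (auto simp: cls)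
  have "\<exists>y. {w, y} \<in> E \<and> {y, hub u} \<in> E \<and> cls y = Some (partner h (f u))"
    if w: "w \<in> {u, v}" and h: "h < 4" for w h
  proof -
    have "w \<in> V - H" using w uv(1,2) \<open>u \<notin> H\<close> \<open>v \<notin> H\<close> by auto
    moreover have "partner h (f u) \<in> {..<4} \<times> UNIV" using h by (simp add: partner_def)
    ultimately have "\<exists>y\<in>neighbours E w \<inter> neighbours E (hub w) - H. f y = partner h (f u)"
      by (rule bspec[OF bspec[OF classes]])
    then obtain y where "y \<in> neighbours E w \<inter> neighbours E (hub w) - H" "f y = partner h (f u)" ..
    then show ?thesis using w uv(3) by (auto simp: neighbours_def cls insert_commute)
  qed
  then show ?thesis by (rule rainbow_connected_through_hub[OF \<chi> x False])
qed

lemma exists_hubs_with_common_neighbours: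
  assumes G: "simple_graph V E" and "V \<noteq> {}" "0 < \<epsilon>" "3 \<le> real m * \<epsilon>"
    and deg: "\<forall>v\<in>V. \<epsilon> * real (card V) \<le> real (degree E v)"
  obtains H hub where "H \<subseteq> V" "card H < m" "\<forall>x\<in>H. hub x = x"
    "\<forall>u\<in>V - H. hub u \<in> H \<and>
       \<epsilon> / (2 * real m) * real (card V) - real m
         \<le> real (card (neighbours E u \<inter> neighbours E (hub u) - H))"
proof -
  have finV: "finite V" using G by (simp add: simple_graph_def)
  have "\<forall>x\<in>V. neighbours E x \<subseteq> V \<and> \<epsilon> * real (card V) \<le> real (card (neighbours E x))"
    using neighbours_subset[OF G] card_neighbours[OF G] deg by simp
  then obtain H where H: "H \<subseteq> V" "card H < m"
    and "\<forall>u\<in>V - H. \<exists>x\<in>H.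
           \<epsilon> / (2 * real m) * real (card V) \<le> real (card (neighbours E u \<inter> neighbours E x))"
    using exists_hub_set[OF finV finV assms(2-4)] by blast
  then obtain hub' where hub': "\<forall>u\<in>V - H. hub' u \<in> H \<and>
      \<epsilon> / (2 * real m) * real (card V) \<le> real (card (neighbours E u \<inter> neighbours E (hub' u)))"
    by metis
  define hub where "hub u = (if u \<in> H then u else hub' u)" for u
  have "\<epsilon> / (2 * real m) * real (card V) - real m
          \<le> real (card (neighbours E u \<inter> neighbours E (hub u) - H))"
    if u: "u \<in> V - H" for u
  proof -
    let ?X = "neighbours E u \<inter> neighbours E (hub' u)"
    have "finite H" using H(1) finV finite_subset by blast
    then have "card ?X \<le> card (?X - H) + card H"
      using diff_card_le_card_Diff[of H ?X] by linarith
    then have "real (card ?X) \<le> real (card (?X - H)) + real m"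
      using H(2) by linarith
    moreover have "\<epsilon> / (2 * real m) * real (card V) \<le> real (card ?X)" "hub u = hub' u"
      using hub' u by (auto simp: hub_def)
    ultimately show ?thesis by simp
  qed
  then show ?thesis using that[OF H, of hub] hub' by (simp add: hub_def)
qed

lemma exists_class_assignment:
  fixes V :: "'a set" and D :: "'a \<Rightarrow> 'a set"
  assumes V: "finite V" and D: "\<forall>u\<in>V - H. D u \<subseteq> V - H \<and> d \<le> real (card (D u))"
    and large: "real (card V) * 8 * (7/8) powr d < 1"
  obtains f :: "'a \<Rightarrow> nat \<times> bool" where "\<forall>w\<in>V - H. f w \<in> {..<4} \<times> UNIV"
    "\<forall>u\<in>V - H. \<forall>c\<in>{..<4} \<times> UNIV. \<exists>w\<in>D u. f w = c"
proof -
  define K where "K = {..<4::nat} \<times> (UNIV :: bool set)"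
  have finK: "finite K" and card_K: "card K = 8" by (simp_all add: K_def card_cartesian_product)
  have "real (card (V - H)) * card K * (1 - 1 / card K) powr d =
      real (card (V - H)) * 8 * (7/8) powr d"
    by (simp add: card_K)
  also have "\<dots> \<le> real (card V) * 8 * (7/8) powr d"
    using card_mono[OF V Diff_subset] by (intro mult_right_mono) auto
  also have "\<dots> < 1" by (rule large)
  finally have "real (card (V - H)) * card K * (1 - 1 / card K) powr d < 1" .
  moreover have "finite (V - H)" "2 \<le> card K" using V by (simp_all add: card_K)
  ultimately obtain f where "\<forall>w\<in>V - H. f w \<in> K" "\<forall>u\<in>V - H. \<forall>c\<in>K. \<exists>w\<in>D u. f w = c"
    using exists_colouring_meeting_all[of "V - H" "V - H" K D d] finK D by blast
  then show ?thesis unfolding K_def by (rule that)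
qed

lemma exists_rainbow_key:
  fixes V :: "'a set" and \<epsilon> :: real
  assumes G: "simple_graph V E" and "V \<noteq> {}" "0 < \<epsilon>" "3 \<le> real m * \<epsilon>"
    and "\<forall>v\<in>V. \<epsilon> * real (card V) \<le> real (degree E v)"
    and large: "real (card V) * 8 * (7/8) powr (\<epsilon> / (2 * real m) * real (card V) - real m) < 1"
  shows "\<exists>(key :: 'a \<Rightarrow> 'a \<times> vertex_class) \<chi>. card (key ` V) \<le> 9 * m \<and>
           (\<forall>u\<in>V. \<forall>v\<in>V. key u = key v \<longrightarrow> a_rainbow_connected E \<chi> u v \<and> b_rainbow_connected E \<chi> u v)"
proof -
  have finV: "finite V" using G by (simp add: simple_graph_def)
  obtain H hub where H: "H \<subseteq> V" "card H < m" and hub_H: "\<forall>x\<in>H. hub x = x"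
    and hub: "\<forall>u\<in>V - H. hub u \<in> H \<and> \<epsilon> / (2 * real m) * real (card V) - real m \<le>
                real (card (neighbours E u \<inter> neighbours E (hub u) - H))"
    by (rule exists_hubs_with_common_neighbours[OF assms(1-5)])
  define d where "d = \<epsilon> / (2 * real m) * real (card V) - real m"
  define D where "D u = neighbours E u \<inter> neighbours E (hub u) - H" for u
  define K where "K = {..<4::nat} \<times> (UNIV :: bool set)"
  have "\<forall>u\<in>V - H. D u \<subseteq> V - H \<and> d \<le> real (card (D u))"
    using hub neighbours_subset[OF G] by (auto simp: D_def d_def)
  moreover have "real (card V) * 8 * (7/8) powr d < 1" unfolding d_def by (rule large)
  ultimately obtain f where f: "\<forall>w\<in>V - H. f w \<in> K" "\<forall>u\<in>V - H. \<forall>c\<in>K. \<exists>w\<in>D u. f w = c"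
    unfolding K_def by (rule exists_class_assignment[OF finV])
  define cls where "cls w = (if w \<in> H then None else Some (f w))" for w
  obtain \<chi> where \<chi>: "\<And>p q. \<chi> {p, q} = class_colour (cls p) (cls q)"
    using exists_edge_function[of "\<lambda>p q. class_colour (cls p) (cls q)"] class_colour_commute
    by blast
  define key where "key w = (hub w, cls w)" for w
  have "key ` V \<subseteq> H \<times> insert None (Some ` K)"
    using hub hub_H f by (auto simp: key_def cls_def split: if_splits)
  moreover have "finite (H \<times> insert None (Some ` K))"
    using finite_subset[OF H(1) finV] by (simp add: K_def)
  ultimately have "card (key ` V) \<le> card (H \<times> insert None (Some ` K))"
    by (simp add: card_mono)
  also have "\<dots> \<le> 9 * m"
    using H(2) by (simp add: card_cartesian_product card_image K_def)
  finally have "card (key ` V) \<le> 9 * m" .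
  moreover have "a_rainbow_connected E \<chi> u v \<and> b_rainbow_connected E \<chi> u v"
    if uv: "u \<in> V" "v \<in> V" "key u = key v" for u v
  proof (rule rainbow_connected_same_hub_class[OF \<chi> cls_def hub_H _ _ uv(1,2)])
    show "\<forall>u\<in>V - H. hub u \<in> H" using hub by blast
    show "\<forall>u\<in>V - H. \<forall>c\<in>{..<4} \<times> UNIV. \<exists>w\<in>neighbours E u \<inter> neighbours E (hub u) - H. f w = c"
      using f(2) unfolding D_def K_def .
    show "hub v = hub u" "cls v = cls u" using uv(3) by (simp_all add: key_def)
  qed
  ultimately show ?thesis by blast
qed

lemma exists_rainbow_partition:
  fixes V :: "'a set" and \<epsilon> :: real
  assumes G: "simple_graph V E" and "V \<noteq> {}" "0 < \<epsilon>" "3 \<le> real m * \<epsilon>"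
    and "\<forall>v\<in>V. \<epsilon> * real (card V) \<le> real (degree E v)"
    and "real (card V) * 8 * (7/8) powr (\<epsilon> / (2 * real m) * real (card V) - real m) < 1"
    and "9 * m \<le> N"
  shows "\<exists>k P \<chi>. k \<le> N \<and> (\<forall>i\<in>{1..k}. P i \<noteq> {}) \<and> disjoint_family_on P {1..k} \<and>
           (\<Union>i\<in>{1..k}. P i) = V \<and>
           (\<forall>i\<in>{1..k}. \<forall>u\<in>P i. \<forall>v\<in>P i. a_rainbow_connected E \<chi> u v \<and> b_rainbow_connected E \<chi> u v)"
proof -
  obtain key :: "'a \<Rightarrow> 'a \<times> vertex_class" and \<chi> where key: "card (key ` V) \<le> 9 * m"
    and blocks: "\<forall>u\<in>V. \<forall>v\<in>V. key u = key v \<longrightarrow>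
                   a_rainbow_connected E \<chi> u v \<and> b_rainbow_connected E \<chi> u v"
    using exists_rainbow_key[OF assms(1-6)] by blast
  have "finite V" using G by (simp add: simple_graph_def)
  then obtain k P where P: "k \<le> N" "\<forall>i\<in>{1..k}. P i \<noteq> {}" "disjoint_family_on P {1..k}"
      "(\<Union>i\<in>{1..k}. P i) = V" and same_key: "\<forall>i\<in>{1..k}. \<forall>u\<in>P i. \<forall>v\<in>P i. key u = key v"
    using partition_by_key[of V key N] key assms(7) by auto
  have "\<forall>i\<in>{1..k}. \<forall>u\<in>P i. \<forall>v\<in>P i. a_rainbow_connected E \<chi> u v \<and> b_rainbow_connected E \<chi> u v"
    using same_key blocks P(4) by blast
  with P show ?thesis by (intro exI[of _ k] exI[of _ P] exI[of _ \<chi>]) simp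
qed

theorem lemma3p6:
  fixes \<epsilon> :: real
  assumes "\<epsilon> > 0"
  shows "\<exists>N::nat. \<forall>(V::nat set) E.
           simple_graph V E \<and> connected_graph V E \<and> card V > N \<and>
           (\<forall>v\<in>V. real (degree E v) \<ge> \<epsilon> * real (card V)) \<longrightarrow>
           (\<exists>k::nat. \<exists>P::nat \<Rightarrow> nat set. \<exists>\<chi>::nat set \<Rightarrow> colour.
              k \<le> N \<and>
              (\<forall>i\<in>{1..k}. P i \<noteq> {}) \<and>
              disjoint_family_on P {1..k} \<and>
              (\<Union>i\<in>{1..k}. P i) = V \<and>
              (\<forall>i\<in>{1..k}. \<forall>u\<in>P i. \<forall>v\<in>P i.
                 a_rainbow_connected E \<chi> u v \<and> b_rainbow_connected E \<chi> u v))"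
proof -
  obtain m :: nat where m: "3 / \<epsilon> < real m" using reals_Archimedean2 by blast
  have "0 < 3 / \<epsilon>" using assms by simp
  with m have "0 < real m" by linarith
  with assms have "0 < \<epsilon> / (2 * real m)" by simp
  have m_\<epsilon>: "3 \<le> real m * \<epsilon>" using m assms by (simp add: pos_divide_less_eq)
  obtain N0 where N0:
      "\<And>n. N0 \<le> n \<Longrightarrow> real n * 8 * (7/8) powr (\<epsilon> / (2 * real m) * real n - real m) < 1"
    using eventually_n_times_powr_less_1[of "7/8" "\<epsilon> / (2 * real m)" 8 "real m"]
      \<open>0 < \<epsilon> / (2 * real m)\<close>
    by (auto simp: eventually_sequentially)
  show ?thesis
  proof (rule exI[of _ "max N0 (9 * m)"], intro allI impI, elim conjE,
      rule exists_rainbow_partition[where \<epsilon> = \<epsilon> and m = m])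
  qed (use assms m_\<epsilon> N0 in auto)
qed

end
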